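(* Let $\mathcal C\subseteq2^{[n]}$ be a stable hyperplane code. Then the polar complex $\Gamma(\mathcal C)$ is shellable.
   Context: A code is a subset $\mathcal C\subseteq 2^{[n]}$. An oriented affine hyperplane in $\mathbb R^d$ is $H=\{x:w\cdot x-h=0\}$, $w\ne0$, with $H^+=\{w\cdot x-h>0\}$. For $\mathcal H=\{H_1,\dots,H_n\}$ and open convex $X\subseteq\mathbb R^d$, the atom of $\sigma\subseteq[n]$ is $A_\sigma=\bigl(\bigcap_{i\in\sigma}(H_i^+\cap X)\bigr)\setminus\bigcup_{j\notin\sigma}H_j^+$ ($A_\emptyset=X\setminus\bigcup_iH_i^+$), and $\mathrm{code}(\mathcal H,X)=\{\sigma:A_\sigma\ne\emptyset\}$. $(\mathcal H,X)$ is stable if $X$ is open convex and whenever $X\cap\bigcap_{i\in\sigma}H_i\ne\emptyset$, $\dim\bigcap_{i\in\sigma}H_i=d-|\sigma|$; a stable hyperplane code is the code of a stable pair. The polar complex $\Gamma(\mathcal C)$ is the simplicial complex on vertex set $[n]\sqcup\{\bar1,\dots,\bar n\}$ consisting of all subsets of the sets $\Sigma(\sigma)=\sigma\sqcup\{\bar i:i\in[n]\setminus\sigma\}$, $\sigma\in\mathcal C$; it is pure of dimension $n-1$. A pure $k$-dimensional simplicial complex is shellable if its facets admit an ordering $F_1,\dots,F_t$ such that for each $i>1$ the complex $\Delta(\{F_i\})\cap\Delta(\{F_1,\dots,F_{i-1}\})$ is pure of dimension $k-1$, where $\Delta(\mathcal F)$ denotes the set of all subsets of members of $\mathcal F$.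 *)

theory Defs
  imports "HOL-Analysis.Analysis"
begin

text \<open>Hyperplanes are indexed by [n] = {1..n}; hyperplane i is given by
  normal vector w i (nonzero) and offset h i: H_i = {x. w i \<bullet> x - h i = 0},
  H_i^+ = {x. w i \<bullet> x - h i > 0}. The ambient space R^d is an arbitrary
  euclidean_space type 'a, d = DIM('a).\<close>

definition hyp :: "'a::euclidean_space \<Rightarrow> real \<Rightarrow> 'a set" where
  "hyp v c = {x. v \<bullet> x - c = 0}"

definition hyp_pos :: "'a::euclidean_space \<Rightarrow> real \<Rightarrow> 'a set" where
  "hyp_pos v c = {x. v \<bullet> x - c > 0}"

definition atom :: "nat \<Rightarrow> (nat \<Rightarrow> 'a::euclidean_space) \<Rightarrow> (nat \<Rightarrow> real) \<Rightarrow> 'a set \<Rightarrow> nat set \<Rightarrow> 'a set" where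
  "atom n w h X \<sigma> =
     {x \<in> X. (\<forall>i\<in>\<sigma>. x \<in> hyp_pos (w i) (h i)) \<and> (\<forall>j\<in>{1..n} - \<sigma>. x \<notin> hyp_pos (w j) (h j))}"

definition hyp_code :: "nat \<Rightarrow> (nat \<Rightarrow> 'a::euclidean_space) \<Rightarrow> (nat \<Rightarrow> real) \<Rightarrow> 'a set \<Rightarrow> nat set set" where
  "hyp_code n w h X = {\<sigma>. \<sigma> \<subseteq> {1..n} \<and> atom n w h X \<sigma> \<noteq> {}}"

definition stable_pair :: "nat \<Rightarrow> (nat \<Rightarrow> 'a::euclidean_space) \<Rightarrow> (nat \<Rightarrow> real) \<Rightarrow> 'a set \<Rightarrow> bool" where
  "stable_pair n w h X \<longleftrightarrow>
     (\<forall>i\<in>{1..n}. w i \<noteq> 0) \<and> open X \<and> convex X \<and>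
     (\<forall>\<sigma>. \<sigma> \<subseteq> {1..n} \<longrightarrow> X \<inter> (\<Inter>i\<in>\<sigma>. hyp (w i) (h i)) \<noteq> {} \<longrightarrow>
         aff_dim (\<Inter>i\<in>\<sigma>. hyp (w i) (h i)) = int DIM('a) - int (card \<sigma>))"

text \<open>Polar complex: vertices Inl i (= i) and Inr i (= bar i), i in [n].\<close>
definition polar_facet :: "nat \<Rightarrow> nat set \<Rightarrow> (nat + nat) set" where
  "polar_facet n \<sigma> = Inl ` \<sigma> \<union> Inr ` ({1..n} - \<sigma>)"

definition polar_complex :: "nat \<Rightarrow> nat set set \<Rightarrow> (nat + nat) set set" where
  "polar_complex n C = {\<tau>. \<exists>\<sigma>\<in>C. \<tau> \<subseteq> polar_facet n \<sigma>}"

definition gen_complex :: "'v set set \<Rightarrow> 'v set set" where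
  "gen_complex F = {\<tau>. \<exists>S\<in>F. \<tau> \<subseteq> S}"

definition facets :: "'v set set \<Rightarrow> 'v set set" where
  "facets K = {F \<in> K. \<forall>G\<in>K. F \<subseteq> G \<longrightarrow> G = F}"

definition pure_dim :: "'v set set \<Rightarrow> int \<Rightarrow> bool" where
  "pure_dim K k \<longleftrightarrow> (\<forall>F\<in>facets K. finite F \<and> int (card F) = k + 1)"

definition shellable :: "'v set set \<Rightarrow> int \<Rightarrow> bool" where
  "shellable K k \<longleftrightarrow> pure_dim K k \<and>
     (\<exists>Fs. distinct Fs \<and> set Fs = facets K \<and>
        (\<forall>i. 0 < i \<and> i < length Fs \<longrightarrow>
            pure_dim (gen_complex {Fs ! i} \<inter> gen_complex (set (take i Fs))) (k - 1)))"

end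

theory Submission
  imports Defs
begin

(* Shrink X to a polytope P inside X that meets every atom, and perturb the offsets of its
   facets so that, together with the hyperplanes H_i, the normals of the constraints tight at
   any point of X are linearly independent. For a codeword sigma let Q(sigma) be the part of P
   lying (weakly) on sigma's side of every H_i, and let Phi(sigma) be the minimum over Q(sigma)
   of a generic linear functional f. The minimiser is a vertex at which f is a positive
   combination of the tight normals; these signs and the strict constraints determine sigma, so
   Phi is injective. If Phi(sigma') < Phi(sigma), some tight wall H_m with positive multiplier
   separates the minimiser of Q(sigma) from Q(sigma'); stepping through H_m lowers f and lands in
   the atom of sigma with m toggled. Hence ordering the facets of the polar complex by Phi gives
   a shelling, every earlier facet meeting the current one inside a codimension-one face. *)

section \<open>Linearly independent families\<close>

definition indep_family :: "'j set \<Rightarrow> ('j \<Rightarrow> 'a::real_vector) \<Rightarrow> bool" where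
  "indep_family D V \<longleftrightarrow>
     finite D \<and> (\<forall>u. (\<Sum>j\<in>D. u j *\<^sub>R V j) = 0 \<longrightarrow> (\<forall>j\<in>D. u j = 0))"

lemma indep_familyD:
  "indep_family D V \<Longrightarrow> (\<Sum>j\<in>D. u j *\<^sub>R V j) = 0 \<Longrightarrow> j \<in> D \<Longrightarrow> u j = 0"
  by (auto simp: indep_family_def)

lemma sum_scaleR_in_span_image: "(\<Sum>j\<in>D. \<mu> j *\<^sub>R V j) \<in> span (V ` D)"
  by (intro span_sum span_mul span_base) auto

lemma in_span_image_imp_sum:
  assumes "finite D" "x \<in> span (V ` D)"
  shows "\<exists>\<mu>. x = (\<Sum>j\<in>D. \<mu> j *\<^sub>R V j)"
proof -
  obtain u where u: "(\<Sum>v\<in>V ` D. u v *\<^sub>R v) = x"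
    using assms span_finite[of "V ` D"] by auto
  define g where "g = inv_into D V"
  have g: "g ` V ` D \<subseteq> D" "inj_on g (V ` D)" "\<And>v. v \<in> V ` D \<Longrightarrow> V (g v) = v"
    unfolding g_def by (auto intro: inv_into_into inj_on_inv_into f_inv_into_f)
  define \<mu> where "\<mu> j = (if j \<in> g ` V ` D then u (V j) else 0)" for j
  have "(\<Sum>j\<in>D. \<mu> j *\<^sub>R V j) = (\<Sum>j\<in>g ` V ` D. \<mu> j *\<^sub>R V j)"
    by (rule sum.mono_neutral_right) (use assms(1) g in \<open>auto simp: \<mu>_def\<close>)
  also have "\<dots> = (\<Sum>v\<in>V ` D. u v *\<^sub>R v)"
    by (subst sum.reindex[OF g(2)]) (auto intro!: sum.cong simp: \<mu>_def g(3))
  finally show ?thesis using u by metis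
qed

lemma indep_family_not_in_span:
  assumes "indep_family D V" "m \<in> D"
  shows "V m \<notin> span (V ` (D - {m}))"
proof
  assume "V m \<in> span (V ` (D - {m}))"
  moreover have fin: "finite D" using assms(1) by (simp add: indep_family_def)
  ultimately obtain \<mu> where \<mu>: "V m = (\<Sum>j\<in>D - {m}. \<mu> j *\<^sub>R V j)"
    using in_span_image_imp_sum[of "D - {m}" "V m" V] by auto
  define u where "u j = (if j = m then -1 else \<mu> j)" for j
  have "(\<Sum>j\<in>D. u j *\<^sub>R V j) = u m *\<^sub>R V m + (\<Sum>j\<in>D - {m}. u j *\<^sub>R V j)"
    using assms(2) fin by (simp add: sum.remove)
  also have "\<dots> = 0" using \<mu> by (simp add: u_def)
  finally have "u m = 0" using assms by (blast intro: indep_familyD)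
  then show False by (simp add: u_def)
qed

lemma not_in_span_imp_orthogonal_witness:
  fixes V :: "'j \<Rightarrow> 'a::euclidean_space"
  assumes "x \<notin> span (V ` D)"
  obtains z where "\<And>j. j \<in> D \<Longrightarrow> V j \<bullet> z = 0" "x \<bullet> z > 0"
proof -
  obtain y z where yz: "y \<in> span (V ` D)" "\<And>v. v \<in> span (V ` D) \<Longrightarrow> orthogonal z v" "x = y + z"
    using orthogonal_subspace_decomp_exists by blast
  have "V j \<bullet> z = 0" if "j \<in> D" for j
    using yz(2)[of "V j"] that by (simp add: span_base orthogonal_def inner_commute)
  moreover have "x \<bullet> z > 0"
  proof -
    have "y \<bullet> z = 0" using yz(2)[OF yz(1)] by (simp add: orthogonal_def inner_commute)
    moreover have "z \<noteq> 0" using yz assms by auto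
    ultimately show ?thesis using yz(3) by (simp add: inner_add_left)
  qed
  ultimately show thesis by (rule that)
qed

lemma indep_family_solvable:
  fixes V :: "'j \<Rightarrow> 'a::euclidean_space"
  assumes "indep_family D V"
  shows "\<exists>u. \<forall>j\<in>D. V j \<bullet> u = t j"
proof -
  have fin: "finite D" using assms by (simp add: indep_family_def)
  have "\<forall>m\<in>D. \<exists>z. (\<forall>j\<in>D - {m}. V j \<bullet> z = 0) \<and> V m \<bullet> z > 0"
    by (metis not_in_span_imp_orthogonal_witness indep_family_not_in_span[OF assms])
  then obtain Z where Z: "\<And>m j. m \<in> D \<Longrightarrow> j \<in> D - {m} \<Longrightarrow> V j \<bullet> Z m = 0"
    "\<And>m. m \<in> D \<Longrightarrow> V m \<bullet> Z m > 0"
    by metis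
  define u where "u = (\<Sum>m\<in>D. (t m / (V m \<bullet> Z m)) *\<^sub>R Z m)"
  have "V j \<bullet> u = t j" if j: "j \<in> D" for j
  proof -
    have "V j \<bullet> u = (\<Sum>m\<in>D. if m = j then t j / (V j \<bullet> Z j) * (V j \<bullet> Z j) else 0)"
      unfolding u_def inner_sum_right by (rule sum.cong) (use Z(1) j in auto)
    also have "\<dots> = t j" using fin j Z(2)[OF j] by simp
    finally show ?thesis .
  qed
  then show ?thesis by blast
qed

lemma indep_family_scaleR:
  assumes "indep_family D V" "\<And>j. j \<in> D \<Longrightarrow> s j \<noteq> 0"
  shows "indep_family D (\<lambda>j. s j *\<^sub>R V j)"
proof -
  have "u j = 0" if "(\<Sum>j\<in>D. u j *\<^sub>R s j *\<^sub>R V j) = 0" "j \<in> D" for u j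
    using indep_familyD[OF assms(1), of "\<lambda>j. u j * s j"] that assms(2) by simp
  then show ?thesis using assms(1) by (simp add: indep_family_def)
qed

lemma indep_family_insert:
  assumes "indep_family D V" "k \<notin> D" "V k \<notin> span (V ` D)"
  shows "indep_family (insert k D) V"
  unfolding indep_family_def
proof (intro conjI allI impI ballI)
  have fin: "finite D" using assms by (simp add: indep_family_def)
  then show "finite (insert k D)" by simp
  fix u j assume u: "(\<Sum>j\<in>insert k D. u j *\<^sub>R V j) = 0" and j: "j \<in> insert k D"
  have e: "u k *\<^sub>R V k = - (\<Sum>j\<in>D. u j *\<^sub>R V j)"
    using u fin assms(2) by (simp add: eq_neg_iff_add_eq_0)
  have uk: "u k = 0"
  proof (rule ccontr)
    assume "u k \<noteq> 0"
    then have "V k = (\<Sum>j\<in>D. (- u j / u k) *\<^sub>R V j)"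
      using arg_cong[OF e, of "scaleR (inverse (u k))"]
      by (simp add: scaleR_sum_right divide_inverse mult.commute sum_negf)
    then show False using assms(3) sum_scaleR_in_span_image by metis
  qed
  then have "(\<Sum>j\<in>D. u j *\<^sub>R V j) = 0" using e by simp
  then show "u j = 0" using j uk assms(1) by (auto intro: indep_familyD)
qed

lemma indep_family_inj_on:
  assumes "indep_family D V"
  shows "inj_on V D"
proof (rule inj_onI, rule ccontr)
  fix j k assume jk: "j \<in> D" "k \<in> D" "V j = V k" "j \<noteq> k"
  then have "V j \<in> span (V ` (D - {j}))" by (intro span_base) auto
  then show False using indep_family_not_in_span[OF assms jk(1)] by simp
qed

lemma indep_family_independent:
  assumes "indep_family D V"
  shows "independent (V ` D)"
proof (rule independent_if_scalars_zero)
  show "finite (V ` D)" using assms by (simp add: indep_family_def)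
  fix c v assume c: "(\<Sum>v\<in>V ` D. c v *\<^sub>R v) = 0" and v: "v \<in> V ` D"
  have "(\<Sum>j\<in>D. c (V j) *\<^sub>R V j) = 0"
    using c by (simp add: sum.reindex[OF indep_family_inj_on[OF assms]])
  then show "c v = 0" using v indep_familyD[OF assms, of "\<lambda>j. c (V j)"] by auto
qed

lemma independent_imp_indep_family:
  fixes V :: "'j \<Rightarrow> 'a::euclidean_space"
  assumes "finite D" "inj_on V D" "independent (V ` D)"
  shows "indep_family D V"
  unfolding indep_family_def
proof (intro conjI allI impI ballI)
  fix u j assume u: "(\<Sum>j\<in>D. u j *\<^sub>R V j) = 0" and j: "j \<in> D"
  define c where "c = u \<circ> inv_into D V"
  have "(\<Sum>v\<in>V ` D. c v *\<^sub>R v) = 0"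
    using u assms(2) by (simp add: sum.reindex c_def)
  then have "c (V j) = 0"
    using iffD1[OF independent_explicit assms(3)] j by blast
  then show "u j = 0" using assms(2) j by (simp add: c_def)
qed (rule assms(1))

lemma indep_family_card_le:
  fixes V :: "'j \<Rightarrow> 'a::euclidean_space"
  assumes "indep_family D V"
  shows "card D \<le> DIM('a)"
  using independent_bound[OF indep_family_independent[OF assms]]
    card_image[OF indep_family_inj_on[OF assms]] by simp

lemma indep_family_full_orthogonal_eq_0:
  fixes V :: "'j \<Rightarrow> 'a::euclidean_space"
  assumes "indep_family D V" "card D = DIM('a)" "\<And>j. j \<in> D \<Longrightarrow> V j \<bullet> u = 0"
  shows "u = 0"
proof -
  have "UNIV \<subseteq> span (V ` D)"
    using card_ge_dim_independent[OF _ indep_family_independent[OF assms(1)]]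
      card_image[OF indep_family_inj_on[OF assms(1)]] assms(2) by auto
  then have "orthogonal u u"
    using assms(3) by (intro orthogonal_to_span[of u]) (auto simp: orthogonal_def inner_commute)
  then show ?thesis by (simp add: orthogonal_def)
qed

lemma indep_family_reindex:
  assumes "indep_family D V" "inj_on \<phi> D" "\<And>j. j \<in> D \<Longrightarrow> V' (\<phi> j) = V j"
  shows "indep_family (\<phi> ` D) V'"
  unfolding indep_family_def
proof (intro conjI allI impI ballI)
  show "finite (\<phi> ` D)" using assms(1) by (simp add: indep_family_def)
  fix u k assume u: "(\<Sum>k\<in>\<phi> ` D. u k *\<^sub>R V' k) = 0" and k: "k \<in> \<phi> ` D"
  then have "(\<Sum>j\<in>D. u (\<phi> j) *\<^sub>R V j) = 0"
    by (simp add: sum.reindex[OF assms(2)] assms(3))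
  then show "u k = 0" using k indep_familyD[OF assms(1), of "\<lambda>j. u (\<phi> j)"] by auto
qed

lemma indep_family_farkas:
  fixes V :: "'j \<Rightarrow> 'a::euclidean_space"
  assumes indep: "indep_family D V"
    and cone: "\<And>u. (\<And>j. j \<in> D \<Longrightarrow> V j \<bullet> u \<le> 0) \<Longrightarrow> f \<bullet> u \<ge> 0"
  shows "\<exists>lam. (\<forall>j\<in>D. lam j \<ge> 0) \<and> f = - (\<Sum>j\<in>D. lam j *\<^sub>R V j)"
proof -
  have fin: "finite D" using indep by (simp add: indep_family_def)
  have "f \<in> span (V ` D)"
  proof (rule ccontr)
    assume "f \<notin> span (V ` D)"
    then obtain u where "\<And>j. j \<in> D \<Longrightarrow> V j \<bullet> u = 0" "f \<bullet> u > 0"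
      using not_in_span_imp_orthogonal_witness by blast
    then show False using cone[of "- u"] by simp
  qed
  then obtain \<mu> where \<mu>: "f = (\<Sum>j\<in>D. \<mu> j *\<^sub>R V j)" using in_span_image_imp_sum[OF fin] by blast
  have "\<mu> m \<le> 0" if m: "m \<in> D" for m
  proof -
    obtain u where u: "\<forall>j\<in>D. V j \<bullet> u = (if j = m then -1 else 0)"
      using indep_family_solvable[OF indep, of "\<lambda>j. if j = m then -1 else 0"] by blast
    have "f \<bullet> u = (\<Sum>j\<in>D. if j = m then - \<mu> m else 0)"
      unfolding \<mu> inner_sum_left by (rule sum.cong) (simp_all add: u)
    also have "\<dots> = - \<mu> m" using fin m by simp
    finally show ?thesis using cone[of u] u by fastforce
  qed
  then show ?thesis by (intro exI[of _ "\<lambda>j. - \<mu> j"]) (auto simp: \<mu> sum_negf)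
qed

section \<open>Stable arrangements\<close>

lemma dim_orthogonal_vectors:
  fixes A :: "'a::euclidean_space set"
  shows "dim {u. \<forall>v\<in>A. v \<bullet> u = 0} + dim A = DIM('a)"
proof -
  have "{u. \<forall>v\<in>A. v \<bullet> u = 0} = {u \<in> UNIV. \<forall>v\<in>span A. orthogonal v u}"
  proof (intro equalityI subsetI)
    fix u assume u: "u \<in> {u. \<forall>v\<in>A. v \<bullet> u = 0}"
    have "orthogonal v u" if "v \<in> span A" for v
    proof -
      have "orthogonal u v"
        by (rule orthogonal_to_span[OF that]) (use u in \<open>simp add: orthogonal_def inner_commute\<close>)
      then show ?thesis by (simp add: orthogonal_commute)
    qed
    then show "u \<in> {u \<in> UNIV. \<forall>v\<in>span A. orthogonal v u}" by simp
  next
    fix u assume "u \<in> {u \<in> UNIV. \<forall>v\<in>span A. orthogonal v u}"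
    then show "u \<in> {u. \<forall>v\<in>A. v \<bullet> u = 0}" by (simp add: orthogonal_def span_base)
  qed
  then show ?thesis
    using dim_subspace_orthogonal_to_vectors[of "span A" UNIV] by simp
qed

lemma aff_dim_Inter_hyp:
  fixes w :: "'i \<Rightarrow> 'a::euclidean_space"
  assumes "z \<in> (\<Inter>i\<in>S. hyp (w i) (h i))"
  shows "aff_dim (\<Inter>i\<in>S. hyp (w i) (h i)) = int DIM('a) - int (dim (w ` S))"
proof -
  define L where "L = {u. \<forall>v\<in>w ` S. v \<bullet> u = 0}"
  have "(\<Inter>i\<in>S. hyp (w i) (h i)) = (+) z ` L"
  proof (intro set_eqI iffI)
    fix x assume "x \<in> (\<Inter>i\<in>S. hyp (w i) (h i))"
    then have "x - z \<in> L" using assms by (auto simp: L_def hyp_def inner_diff_right)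
    then show "x \<in> (+) z ` L" by (auto intro: image_eqI[of _ _ "x - z"])
  next
    fix x assume "x \<in> (+) z ` L"
    then show "x \<in> (\<Inter>i\<in>S. hyp (w i) (h i))" using assms by (auto simp: L_def hyp_def inner_add_right)
  qed
  then have "aff_dim (\<Inter>i\<in>S. hyp (w i) (h i)) = aff_dim L"
    by (simp only: aff_dim_translation_eq)
  also have "\<dots> = int (dim L)"
    by (rule aff_dim_subspace) (unfold L_def, rule subspace_orthogonal_to_vectors[unfolded orthogonal_def])
  also have "dim L + dim (w ` S) = DIM('a)" unfolding L_def by (rule dim_orthogonal_vectors)
  then have "int (dim L) = int DIM('a) - int (dim (w ` S))" by linarith
  finally show ?thesis .
qed

lemma dim_eq_card_imp_indep_family:
  fixes V :: "'j \<Rightarrow> 'a::euclidean_space"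
  assumes "finite S" "dim (V ` S) = card S"
  shows "indep_family S V"
proof -
  have "card (V ` S) \<le> card S" using assms(1) by (rule card_image_le)
  moreover have "dim (V ` S) \<le> card (V ` S)" using assms(1) by (intro dim_le_card) (auto intro: span_base)
  ultimately have card: "card (V ` S) = card S" using assms(2) by linarith
  show ?thesis
  proof (rule independent_imp_indep_family)
    show "inj_on V S" using card assms(1) by (simp add: eq_card_imp_inj_on)
    show "independent (V ` S)"
      using card assms by (intro card_le_dim_spanning[of "V ` S" "span (V ` S)"]) (auto intro: span_base)
  qed (rule assms(1))
qed

lemma stable_pair_tight_indep_family:
  fixes w :: "nat \<Rightarrow> 'a::euclidean_space"
  assumes "stable_pair n w h X" "z \<in> X"
  shows "indep_family {i \<in> {1..n}. w i \<bullet> z = h i} w"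
proof -
  define S where "S = {i \<in> {1..n}. w i \<bullet> z = h i}"
  have z: "z \<in> (\<Inter>i\<in>S. hyp (w i) (h i))" by (auto simp: S_def hyp_def)
  moreover have "S \<subseteq> {1..n}" by (auto simp: S_def)
  ultimately have "aff_dim (\<Inter>i\<in>S. hyp (w i) (h i)) = int DIM('a) - int (card S)"
    using assms unfolding stable_pair_def by blast
  then have "dim (w ` S) = card S" using aff_dim_Inter_hyp[OF z] by simp
  then show ?thesis unfolding S_def by (intro dim_eq_card_imp_indep_family) simp_all
qed

section \<open>Shellings of polar complexes\<close>

definition toggle :: "'a \<Rightarrow> 'a set \<Rightarrow> 'a set" where
  "toggle m \<sigma> = (if m \<in> \<sigma> then \<sigma> - {m} else insert m \<sigma>)"

lemma toggle_subset: "\<sigma> \<subseteq> A \<Longrightarrow> m \<in> A \<Longrightarrow> toggle m \<sigma> \<subseteq> A"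
  by (auto simp: toggle_def)

lemma pure_dim_Int_gen_complex:
  assumes "\<And>G. G \<in> Gs \<Longrightarrow> \<exists>G'\<in>Gs. F \<inter> G \<subseteq> F \<inter> G' \<and> finite (F \<inter> G') \<and> int (card (F \<inter> G')) = k"
  shows "pure_dim (gen_complex {F} \<inter> gen_complex Gs) (k - 1)"
  unfolding pure_dim_def
proof
  fix T assume T: "T \<in> facets (gen_complex {F} \<inter> gen_complex Gs)"
  then obtain G where "G \<in> Gs" "T \<subseteq> F \<inter> G"
    by (auto simp: facets_def gen_complex_def)
  then obtain G' where G': "G' \<in> Gs" "T \<subseteq> F \<inter> G'" "finite (F \<inter> G')" "int (card (F \<inter> G')) = k"
    using assms by blast
  then have "F \<inter> G' \<in> gen_complex {F} \<inter> gen_complex Gs"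
    by (auto simp: gen_complex_def)
  then have "T = F \<inter> G'" using T G'(2) unfolding facets_def by blast
  then show "finite T \<and> int (card T) = k - 1 + 1" using G' by simp
qed

lemma polar_facet_inject:
  assumes "\<sigma> \<subseteq> {1..n}" "\<sigma>' \<subseteq> {1..n}" "polar_facet n \<sigma> \<subseteq> polar_facet n \<sigma>'"
  shows "\<sigma> = \<sigma>'"
proof (intro set_eqI iffI)
  fix x assume "x \<in> \<sigma>"
  then show "x \<in> \<sigma>'" using assms(3) by (auto simp: polar_facet_def)
next
  fix x assume x: "x \<in> \<sigma>'"
  show "x \<in> \<sigma>"
  proof (rule ccontr)
    assume "x \<notin> \<sigma>"
    then have "Inr x \<in> polar_facet n \<sigma>" using x assms(2) by (auto simp: polar_facet_def)
    then show False using assms(3) x by (auto simp: polar_facet_def)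
  qed
qed

lemma card_polar_facet:
  assumes "\<sigma> \<subseteq> {1..n}"
  shows "finite (polar_facet n \<sigma>)" "card (polar_facet n \<sigma>) = n"
proof -
  have fin: "finite \<sigma>" using assms finite_subset by blast
  then show "finite (polar_facet n \<sigma>)" by (simp add: polar_facet_def)
  have "card (polar_facet n \<sigma>) = card \<sigma> + card ({1..n} - \<sigma>)"
    unfolding polar_facet_def using fin
    by (subst card_Un_disjoint) (auto simp: card_image)
  also have "\<dots> = n" using assms fin card_mono[OF _ assms] by (simp add: card_Diff_subset)
  finally show "card (polar_facet n \<sigma>) = n" .
qed

lemma polar_facet_Int_toggle:
  assumes "\<sigma> \<subseteq> {1..n}" "m \<in> {1..n}"
  shows "polar_facet n \<sigma> \<inter> polar_facet n (toggle m \<sigma>) =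
         polar_facet n \<sigma> - {if m \<in> \<sigma> then Inl m else Inr m}"
  using assms by (auto simp: polar_facet_def toggle_def)

lemma card_polar_facet_Int_toggle:
  assumes "\<sigma> \<subseteq> {1..n}" "m \<in> {1..n}"
  shows "finite (polar_facet n \<sigma> \<inter> polar_facet n (toggle m \<sigma>))"
    "card (polar_facet n \<sigma> \<inter> polar_facet n (toggle m \<sigma>)) = n - 1"
proof -
  have "(if m \<in> \<sigma> then Inl m else Inr m) \<in> polar_facet n \<sigma>"
    using assms by (auto simp: polar_facet_def)
  then show "finite (polar_facet n \<sigma> \<inter> polar_facet n (toggle m \<sigma>))"
    "card (polar_facet n \<sigma> \<inter> polar_facet n (toggle m \<sigma>)) = n - 1"
    unfolding polar_facet_Int_toggle[OF assms] using card_polar_facet[OF assms(1)] by auto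
qed

lemma facets_polar_complex:
  assumes "C \<subseteq> Pow {1..n}"
  shows "facets (polar_complex n C) = polar_facet n ` C"
proof (intro equalityI subsetI)
  fix F assume F: "F \<in> facets (polar_complex n C)"
  then obtain \<sigma> where \<sigma>: "\<sigma> \<in> C" "F \<subseteq> polar_facet n \<sigma>"
    by (auto simp: facets_def polar_complex_def)
  then have "polar_facet n \<sigma> = F" using F by (auto simp: facets_def polar_complex_def)
  then show "F \<in> polar_facet n ` C" using \<sigma> by auto
next
  fix F assume "F \<in> polar_facet n ` C"
  then obtain \<sigma> where \<sigma>: "\<sigma> \<in> C" "F = polar_facet n \<sigma>" by auto
  have "G = F" if "\<sigma>' \<in> C" "F \<subseteq> G" "G \<subseteq> polar_facet n \<sigma>'" for G \<sigma>'
    using polar_facet_inject[of \<sigma> n \<sigma>'] assms \<sigma> that by auto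
  then show "F \<in> facets (polar_complex n C)"
    using \<sigma> by (auto simp: facets_def polar_complex_def)
qed

lemma finite_list_sorted_by_injective_key:
  fixes \<Phi> :: "'a \<Rightarrow> 'b::linorder"
  assumes "finite C" "inj_on \<Phi> C"
  obtains cs where "set cs = C" "distinct cs"
    "\<And>i j. i < j \<Longrightarrow> j < length cs \<Longrightarrow> \<Phi> (cs ! i) < \<Phi> (cs ! j)"
proof -
  obtain xs where xs: "set xs = C" "distinct xs" using finite_distinct_list[OF assms(1)] by blast
  define cs where "cs = sort_key \<Phi> xs"
  have cs: "set cs = C" "distinct cs" "sorted (map \<Phi> cs)" using xs by (auto simp: cs_def)
  have "\<Phi> (cs ! i) < \<Phi> (cs ! j)" if "i < j" "j < length cs" for i j
  proof -
    have "\<Phi> (cs ! i) \<le> \<Phi> (cs ! j)" using sorted_nth_mono[OF cs(3), of i j] that by simp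
    moreover have "cs ! i \<noteq> cs ! j" using cs(2) that by (simp add: nth_eq_iff_index_eq)
    moreover have "cs ! i \<in> C" "cs ! j \<in> C" using that cs(1) by auto
    ultimately show ?thesis using assms(2) by (metis inj_onD order_le_imp_less_or_eq)
  qed
  then show thesis using that cs by blast
qed

lemma shellable_polar_complex_if_potential:
  fixes \<Phi> :: "nat set \<Rightarrow> real"
  assumes C: "C \<subseteq> Pow {1..n}" and inj: "inj_on \<Phi> C"
    and descent: "\<And>\<sigma> \<sigma>'. \<sigma> \<in> C \<Longrightarrow> \<sigma>' \<in> C \<Longrightarrow> \<Phi> \<sigma>' < \<Phi> \<sigma> \<Longrightarrow>
      \<exists>m\<in>{1..n}. (m \<in> \<sigma> \<longleftrightarrow> m \<notin> \<sigma>') \<and> toggle m \<sigma> \<in> C \<and> \<Phi> (toggle m \<sigma>) < \<Phi> \<sigma>"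
  shows "shellable (polar_complex n C) (int n - 1)"
proof -
  have "finite C" using C by (meson finite_Pow_iff finite_atLeastAtMost finite_subset)
  then obtain cs where cs: "set cs = C" "distinct cs"
    and mono: "\<And>i j. i < j \<Longrightarrow> j < length cs \<Longrightarrow> \<Phi> (cs ! i) < \<Phi> (cs ! j)"
    using finite_list_sorted_by_injective_key inj by blast
  define Fs where "Fs = map (polar_facet n) cs"
  have "inj_on (polar_facet n) C"
  proof (rule inj_onI)
    fix \<sigma> \<sigma>' assume "\<sigma> \<in> C" "\<sigma>' \<in> C" "polar_facet n \<sigma> = polar_facet n \<sigma>'"
    then show "\<sigma> = \<sigma>'" using C polar_facet_inject[of \<sigma> n \<sigma>'] by blast
  qed
  then have "distinct Fs" using cs by (simp add: Fs_def distinct_map)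
  moreover have "set Fs = facets (polar_complex n C)"
    using cs(1) facets_polar_complex[OF C] by (simp add: Fs_def)
  moreover have "pure_dim (polar_complex n C) (int n - 1)"
    unfolding pure_dim_def facets_polar_complex[OF C] using card_polar_facet C by auto
  moreover have "pure_dim (gen_complex {Fs ! i} \<inter> gen_complex (set (take i Fs))) (int n - 1 - 1)"
    if i: "0 < i" "i < length Fs" for i
  proof (rule pure_dim_Int_gen_complex)
    fix G assume "G \<in> set (take i Fs)"
    then obtain j where j: "j < i" "G = polar_facet n (cs ! j)"
      using i by (auto simp: in_set_conv_nth Fs_def)
    let ?\<sigma> = "cs ! i"
    have il: "i < length cs" using i by (simp add: Fs_def)
    have \<sigma>: "?\<sigma> \<in> C" "cs ! j \<in> C" using il j cs(1) by auto
    obtain m where m: "m \<in> {1..n}" "m \<in> ?\<sigma> \<longleftrightarrow> m \<notin> cs ! j"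
      "toggle m ?\<sigma> \<in> C" "\<Phi> (toggle m ?\<sigma>) < \<Phi> ?\<sigma>"
      using descent[OF \<sigma>] mono[OF j(1) il] by blast
    obtain k where k: "k < length cs" "cs ! k = toggle m ?\<sigma>"
      using m(3) cs(1) by (metis in_set_conv_nth)
    have "k < i" using mono[of i k] mono[of k i] k m(4) il by (metis less_asym linorder_neqE_nat)
    then have "polar_facet n (toggle m ?\<sigma>) \<in> set (take i Fs)"
      using k i by (auto simp: in_set_conv_nth Fs_def intro!: exI[of _ k])
    moreover have "?\<sigma> \<subseteq> {1..n}" using \<sigma> C by auto
    moreover have "Fs ! i \<inter> G \<subseteq> Fs ! i \<inter> polar_facet n (toggle m ?\<sigma>)"
      using j m il by (auto simp: Fs_def polar_facet_def toggle_def)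
    ultimately show "\<exists>G'\<in>set (take i Fs). Fs ! i \<inter> G \<subseteq> Fs ! i \<inter> G' \<and> finite (Fs ! i \<inter> G')
        \<and> int (card (Fs ! i \<inter> G')) = int n - 1"
      using card_polar_facet_Int_toggle[of ?\<sigma> n m] m(1) il by (auto simp: Fs_def)
  qed
  ultimately show ?thesis unfolding shellable_def by blast
qed

section \<open>Generic bounded arrangements\<close>

lemma exists_small_step:
  fixes g k :: "'j \<Rightarrow> real"
  assumes "finite K" "\<And>j. j \<in> K \<Longrightarrow> g j < 0"
  shows "\<exists>t>0. \<forall>j\<in>K. g j + t * k j < 0"
proof -
  have "\<forall>\<^sub>F t in at_right 0. \<forall>j\<in>K. g j + t * k j < 0"
  proof (rule eventually_ball_finite[OF assms(1)], rule ballI)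
    fix j assume "j \<in> K"
    have "((\<lambda>t. g j + t * k j) \<longlongrightarrow> g j + 0 * k j) (at_right 0)"
      by (intro tendsto_intros)
    then show "\<forall>\<^sub>F t in at_right 0. g j + t * k j < 0"
      using assms(2)[OF \<open>j \<in> K\<close>] by (auto intro: order_tendstoD)
  qed
  then have "\<forall>\<^sub>F t in at_right 0. 0 < t \<and> (\<forall>j\<in>K. g j + t * k j < 0)"
    using eventually_at_right_less by (rule eventually_conj[rotated])
  then show ?thesis using eventually_happens' trivial_limit_at_right_real by blast
qed

lemma negligible_span_card_less:
  fixes S :: "'a::euclidean_space set"
  assumes "finite S" "card S < DIM('a)"
  shows "negligible (span S)"
proof -
  have "dim S \<le> card S" using assms(1) by (intro dim_le_card) (auto intro: span_base)
  then obtain b :: 'a where "b \<noteq> 0" "span S \<subseteq> {x. b \<bullet> x = 0}"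
    using lowdim_subset_hyperplane[of S] assms(2) by auto
  then show ?thesis using negligible_hyperplane[of b 0] negligible_subset by blast
qed

definition constraint_set :: "nat \<Rightarrow> 'b set \<Rightarrow> (nat + 'b) set" where
  "constraint_set n G = Inl ` {1..n} \<union> Inr ` G"

definition normal_of :: "(nat \<Rightarrow> 'a) \<Rightarrow> ('b \<Rightarrow> 'a) \<Rightarrow> nat + 'b \<Rightarrow> 'a" where
  "normal_of w a j = (case j of Inl i \<Rightarrow> w i | Inr g \<Rightarrow> a g)"

definition offset_of :: "(nat \<Rightarrow> real) \<Rightarrow> ('b \<Rightarrow> real) \<Rightarrow> nat + 'b \<Rightarrow> real" where
  "offset_of h c j = (case j of Inl i \<Rightarrow> h i | Inr g \<Rightarrow> c g)"

definition tight_set ::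
  "nat \<Rightarrow> 'b set \<Rightarrow> (nat \<Rightarrow> 'a::real_inner) \<Rightarrow> (nat \<Rightarrow> real) \<Rightarrow> ('b \<Rightarrow> 'a) \<Rightarrow> ('b \<Rightarrow> real) \<Rightarrow> 'a \<Rightarrow> (nat + 'b) set"
  where "tight_set n G w h a c z = {j \<in> constraint_set n G. normal_of w a j \<bullet> z = offset_of h c j}"

definition polyhedron_of :: "'b set \<Rightarrow> ('b \<Rightarrow> 'a::real_inner) \<Rightarrow> ('b \<Rightarrow> real) \<Rightarrow> 'a set" where
  "polyhedron_of G a c = {x. \<forall>g\<in>G. a g \<bullet> x \<le> c g}"

lemma normal_of_simps [simp]: "normal_of w a (Inl i) = w i" "normal_of w a (Inr g) = a g"
  by (simp_all add: normal_of_def)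

lemma offset_of_simps [simp]: "offset_of h c (Inl i) = h i" "offset_of h c (Inr g) = c g"
  by (simp_all add: offset_of_def)

lemma constraint_set_simps [simp]:
  "Inl i \<in> constraint_set n G \<longleftrightarrow> i \<in> {1..n}" "Inr g \<in> constraint_set n G \<longleftrightarrow> g \<in> G"
  by (auto simp: constraint_set_def)

text \<open>Constraint \<open>Inl i\<close> is the hyperplane \<open>H\<^sub>i\<close>, constraint \<open>Inr g\<close> a facet of the bounding
  polytope \<open>P\<close>. The cell of \<open>\<sigma>\<close> is the closed polytope on \<open>\<sigma>\<close>'s side of every \<open>H\<^sub>i\<close> inside \<open>P\<close>.\<close>
locale generic_bounded_arrangement =
  fixes n :: nat and w :: "nat \<Rightarrow> 'a::euclidean_space" and h :: "nat \<Rightarrow> real"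
    and G :: "'b set" and a :: "'b \<Rightarrow> 'a" and c :: "'b \<Rightarrow> real" and X :: "'a set"
  assumes finite_G: "finite G"
    and polyhedron_subset: "polyhedron_of G a c \<subseteq> X"
    and bounded_polyhedron: "bounded (polyhedron_of G a c)"
    and tight_indep: "\<And>z. z \<in> X \<Longrightarrow> indep_family (tight_set n G w h a c z) (normal_of w a)"
begin

abbreviation "J \<equiv> constraint_set n G"
abbreviation "T \<equiv> tight_set n G w h a c"
abbreviation "P \<equiv> polyhedron_of G a c"

definition side :: "nat set \<Rightarrow> nat + 'b \<Rightarrow> real" where
  "side \<sigma> j = (case j of Inl i \<Rightarrow> if i \<in> \<sigma> then -1 else 1 | Inr g \<Rightarrow> 1)"

definition snormal :: "nat set \<Rightarrow> nat + 'b \<Rightarrow> 'a" where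
  "snormal \<sigma> j = side \<sigma> j *\<^sub>R normal_of w a j"

definition soffset :: "nat set \<Rightarrow> nat + 'b \<Rightarrow> real" where
  "soffset \<sigma> j = side \<sigma> j * offset_of h c j"

definition cell :: "nat set \<Rightarrow> 'a set" where
  "cell \<sigma> = {x. \<forall>j\<in>J. snormal \<sigma> j \<bullet> x \<le> soffset \<sigma> j}"

lemma side_cases: "side \<sigma> j = 1 \<or> side \<sigma> j = -1"
  by (simp add: side_def split: sum.splits)

lemma side_nonzero: "side \<sigma> j \<noteq> 0"
  by (simp add: side_def split: sum.splits)

lemma snormal_simps [simp]:
  "snormal \<sigma> (Inl i) = (if i \<in> \<sigma> then - w i else w i)" "snormal \<sigma> (Inr g) = a g"
  "soffset \<sigma> (Inl i) = (if i \<in> \<sigma> then - h i else h i)" "soffset \<sigma> (Inr g) = c g"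
  by (simp_all add: snormal_def soffset_def side_def)

lemma finite_J: "finite J"
  using finite_G by (simp add: constraint_set_def)

lemma tight_subset: "T z \<subseteq> J"
  by (auto simp: tight_set_def)

lemma finite_tight: "finite (T z)"
  using finite_J tight_subset by (rule finite_subset[rotated])

lemma snormal_eq_iff: "snormal \<sigma> j \<bullet> x = soffset \<sigma> j \<longleftrightarrow> normal_of w a j \<bullet> x = offset_of h c j"
  using side_cases[of \<sigma> j] by (auto simp: snormal_def soffset_def)

lemma snormal_tight: "j \<in> T z \<Longrightarrow> snormal \<sigma> j \<bullet> z = soffset \<sigma> j"
  by (simp add: snormal_eq_iff tight_set_def)

lemma snormal_slack:
  assumes "z \<in> cell \<sigma>" "j \<in> J - T z"
  shows "snormal \<sigma> j \<bullet> z < soffset \<sigma> j"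
proof -
  have "snormal \<sigma> j \<bullet> z \<le> soffset \<sigma> j" using assms by (simp add: cell_def)
  moreover have "snormal \<sigma> j \<bullet> z \<noteq> soffset \<sigma> j" using assms(2) by (simp add: snormal_eq_iff tight_set_def)
  ultimately show ?thesis by simp
qed

lemma tight_indep_snormal: "z \<in> X \<Longrightarrow> indep_family (T z) (snormal \<sigma>)"
  unfolding snormal_def by (intro indep_family_scaleR tight_indep) (simp_all add: side_nonzero)

lemma cell_subset_polyhedron: "cell \<sigma> \<subseteq> P"
proof
  fix x assume x: "x \<in> cell \<sigma>"
  have "snormal \<sigma> (Inr g) \<bullet> x \<le> soffset \<sigma> (Inr g)" if "g \<in> G" for g
  proof -
    have "Inr g \<in> J" using that by simp
    then show ?thesis using x unfolding cell_def by blast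
  qed
  then show "x \<in> P" by (simp add: polyhedron_of_def)
qed

lemma cell_subset: "cell \<sigma> \<subseteq> X"
  using cell_subset_polyhedron polyhedron_subset by blast

lemma compact_cell: "compact (cell \<sigma>)"
proof -
  have "cell \<sigma> = (\<Inter>j\<in>J. {x. snormal \<sigma> j \<bullet> x \<le> soffset \<sigma> j})" by (auto simp: cell_def)
  then have "closed (cell \<sigma>)" by (simp add: closed_INT closed_halfspace_le)
  moreover have "bounded (cell \<sigma>)"
    using bounded_polyhedron cell_subset_polyhedron by (rule bounded_subset)
  ultimately show ?thesis by (simp add: compact_eq_bounded_closed)
qed

lemma atom_Int_polyhedron_subset_cell: "atom n w h X \<sigma> \<inter> P \<subseteq> cell \<sigma>"
proof
  fix x assume x: "x \<in> atom n w h X \<sigma> \<inter> P"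
  have "snormal \<sigma> j \<bullet> x \<le> soffset \<sigma> j" if "j \<in> J" for j
  proof (cases j)
    case (Inl i)
    then have "i \<in> {1..n}" using that by simp
    show ?thesis
    proof (cases "i \<in> \<sigma>")
      case True
      then have "x \<in> hyp_pos (w i) (h i)" using x unfolding atom_def by blast
      then show ?thesis using Inl True by (simp add: hyp_pos_def)
    next
      case False
      then have "x \<notin> hyp_pos (w i) (h i)" using x \<open>i \<in> {1..n}\<close> unfolding atom_def by blast
      then show ?thesis using Inl False by (simp add: hyp_pos_def)
    qed
  next
    case (Inr g)
    then show ?thesis using x that by (simp add: polyhedron_of_def)
  qed
  then show "x \<in> cell \<sigma>" by (simp add: cell_def)
qed

lemma exists_step_keeping_slack:
  assumes "z \<in> cell \<sigma>"
  obtains t where "t > 0" "\<And>j. j \<in> J - T z \<Longrightarrow> snormal \<sigma> j \<bullet> (z + t *\<^sub>R u) < soffset \<sigma> j"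
proof -
  have "finite (J - T z)" using finite_J by simp
  moreover have "\<And>j. j \<in> J - T z \<Longrightarrow> snormal \<sigma> j \<bullet> z - soffset \<sigma> j < 0"
    using snormal_slack[OF assms] by simp
  ultimately have "\<exists>t>0. \<forall>j\<in>J - T z. (snormal \<sigma> j \<bullet> z - soffset \<sigma> j) + t * (snormal \<sigma> j \<bullet> u) < 0"
    by (rule exists_small_step)
  then obtain t where t: "t > 0"
    "\<And>j. j \<in> J - T z \<Longrightarrow> (snormal \<sigma> j \<bullet> z - soffset \<sigma> j) + t * (snormal \<sigma> j \<bullet> u) < 0"
    by blast
  have "snormal \<sigma> j \<bullet> (z + t *\<^sub>R u) < soffset \<sigma> j" if "j \<in> J - T z" for j
    using t(2)[OF that] by (simp add: inner_add_right)
  then show thesis using t(1) that by blast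
qed

lemma minimizer_multipliers:
  assumes z: "z \<in> cell \<sigma>" and min: "\<And>y. y \<in> cell \<sigma> \<Longrightarrow> f \<bullet> z \<le> f \<bullet> y"
  shows "\<exists>lam. (\<forall>j\<in>T z. lam j \<ge> 0) \<and> f = - (\<Sum>j\<in>T z. lam j *\<^sub>R snormal \<sigma> j)"
proof (rule indep_family_farkas)
  show "indep_family (T z) (snormal \<sigma>)" using z cell_subset by (blast intro: tight_indep_snormal)
  fix u assume u: "\<And>j. j \<in> T z \<Longrightarrow> snormal \<sigma> j \<bullet> u \<le> 0"
  obtain t where t: "t > 0" "\<And>j. j \<in> J - T z \<Longrightarrow> snormal \<sigma> j \<bullet> (z + t *\<^sub>R u) < soffset \<sigma> j"
    using exists_step_keeping_slack[OF z] by blast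
  have "snormal \<sigma> j \<bullet> (z + t *\<^sub>R u) \<le> soffset \<sigma> j" if "j \<in> J" for j
  proof (cases "j \<in> T z")
    case True
    then show ?thesis
      using snormal_tight[OF True] u[OF True] t(1) by (simp add: inner_add_right mult_nonneg_nonpos)
  next
    case False
    then show ?thesis using t(2) that by (simp add: less_imp_le)
  qed
  then have "z + t *\<^sub>R u \<in> cell \<sigma>" by (simp add: cell_def)
  then have "f \<bullet> z \<le> f \<bullet> z + t * (f \<bullet> u)" using min[of "z + t *\<^sub>R u"] by (simp add: inner_add_right)
  then have "0 \<le> t * (f \<bullet> u)" by simp
  then show "0 \<le> f \<bullet> u" using t(1) by (simp add: zero_le_mult_iff)
qed

lemma minimizer_crosses_wall:
  assumes z: "z \<in> cell \<sigma>" and lam: "\<forall>j\<in>T z. lam j \<ge> 0" "f = - (\<Sum>j\<in>T z. lam j *\<^sub>R snormal \<sigma> j)"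
    and j0: "j0 \<in> T z" "lam j0 > 0"
  obtains p where "snormal \<sigma> j0 \<bullet> p > soffset \<sigma> j0"
    "\<And>j. j \<in> J - {j0} \<Longrightarrow> snormal \<sigma> j \<bullet> p < soffset \<sigma> j" "f \<bullet> p < f \<bullet> z"
proof -
  define M where "M = (\<Sum>j\<in>T z - {j0}. lam j) / lam j0 + 1"
  have "(\<Sum>j\<in>T z - {j0}. lam j) \<ge> 0" using lam(1) by (intro sum_nonneg) auto
  then have M: "M > 0" using j0(2) by (simp add: M_def add_nonneg_pos)
  have "z \<in> X" using z cell_subset by blast
  then have "indep_family (T z) (snormal \<sigma>)" by (rule tight_indep_snormal)
  then obtain u where u: "\<forall>j\<in>T z. snormal \<sigma> j \<bullet> u = (if j = j0 then M else -1)"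
    using indep_family_solvable[where t = "\<lambda>j. if j = j0 then M else -1"] by blast
  have "f \<bullet> u = - (\<Sum>j\<in>T z. lam j * (snormal \<sigma> j \<bullet> u))"
    unfolding lam(2) by (simp add: inner_sum_left)
  also have "\<dots> = - (\<Sum>j\<in>T z. lam j * (if j = j0 then M else -1))"
    using u by (intro arg_cong[where f = uminus] sum.cong) simp_all
  also have "\<dots> = - (lam j0 * M - (\<Sum>j\<in>T z - {j0}. lam j))"
    using finite_tight j0(1) by (simp add: sum.remove sum_negf)
  also have "\<dots> = - lam j0" using j0(2) by (simp add: M_def field_simps)
  finally have fu: "f \<bullet> u < 0" using j0(2) by simp
  obtain t where t: "t > 0" "\<And>j. j \<in> J - T z \<Longrightarrow> snormal \<sigma> j \<bullet> (z + t *\<^sub>R u) < soffset \<sigma> j"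
    using exists_step_keeping_slack[OF z] by blast
  have step: "snormal \<sigma> j \<bullet> (z + t *\<^sub>R u) = soffset \<sigma> j + t * (if j = j0 then M else -1)"
    if "j \<in> T z" for j
    using snormal_tight[OF that] u that by (simp add: inner_add_right)
  show thesis
  proof (rule that[of "z + t *\<^sub>R u"])
    show "snormal \<sigma> j0 \<bullet> (z + t *\<^sub>R u) > soffset \<sigma> j0" using step[OF j0(1)] t(1) M by simp
    show "snormal \<sigma> j \<bullet> (z + t *\<^sub>R u) < soffset \<sigma> j" if "j \<in> J - {j0}" for j
      using that t step[of j] by (cases "j \<in> T z") auto
    show "f \<bullet> (z + t *\<^sub>R u) < f \<bullet> z" using fu t(1) by (simp add: inner_add_right mult_pos_neg)
  qed
qed

lemma toggle_atom_if_crossing: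
  assumes "\<sigma> \<subseteq> {1..n}" "m \<in> {1..n}"
    and cross: "snormal \<sigma> (Inl m) \<bullet> p > soffset \<sigma> (Inl m)"
    and strict: "\<And>j. j \<in> J - {Inl m} \<Longrightarrow> snormal \<sigma> j \<bullet> p < soffset \<sigma> j"
  shows "p \<in> atom n w h X (toggle m \<sigma>) \<inter> P"
proof -
  have "p \<in> P" using strict by (force simp: polyhedron_of_def intro: less_imp_le)
  moreover have "i \<in> toggle m \<sigma> \<longleftrightarrow> p \<in> hyp_pos (w i) (h i)" if "i \<in> {1..n}" for i
  proof (cases "i = m")
    case True
    then show ?thesis using cross by (auto simp: toggle_def hyp_pos_def split: if_splits)
  next
    case False
    then show ?thesis using strict[of "Inl i"] that by (auto simp: toggle_def hyp_pos_def split: if_splits)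
  qed
  moreover have "toggle m \<sigma> \<subseteq> {1..n}" using assms(1,2) by (rule toggle_subset)
  ultimately show ?thesis using polyhedron_subset by (auto simp: atom_def)
qed

lemma minimizer_descent:
  assumes \<sigma>: "\<sigma> \<subseteq> {1..n}" and z: "z \<in> cell \<sigma>" and min: "\<And>y. y \<in> cell \<sigma> \<Longrightarrow> f \<bullet> z \<le> f \<bullet> y"
    and y: "y \<in> cell \<sigma>'" and lt: "f \<bullet> y < f \<bullet> z"
  obtains m p where "m \<in> {1..n}" "m \<in> \<sigma> \<longleftrightarrow> m \<notin> \<sigma>'"
    "p \<in> atom n w h X (toggle m \<sigma>) \<inter> P" "f \<bullet> p < f \<bullet> z"
proof -
  obtain lam where lam: "\<forall>j\<in>T z. lam j \<ge> 0" "f = - (\<Sum>j\<in>T z. lam j *\<^sub>R snormal \<sigma> j)"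
    using minimizer_multipliers[OF z min] by blast
  have "(\<Sum>j\<in>T z. lam j * (snormal \<sigma> j \<bullet> (y - z))) = - (f \<bullet> (y - z))"
    unfolding lam(2) by (simp add: inner_sum_left)
  also have "\<dots> > 0" using lt by (simp add: inner_diff_right)
  finally have "\<exists>j\<in>T z. lam j * (snormal \<sigma> j \<bullet> (y - z)) > 0"
    by (meson not_less sum_nonpos)
  then obtain j0 where j0: "j0 \<in> T z" "lam j0 * (snormal \<sigma> j0 \<bullet> (y - z)) > 0" by blast
  then have lam_j0: "lam j0 > 0" and "snormal \<sigma> j0 \<bullet> (y - z) > 0"
    using lam(1) by (auto simp: zero_less_mult_iff)
  then have violated: "snormal \<sigma> j0 \<bullet> y > soffset \<sigma> j0"
    using snormal_tight[OF j0(1)] by (simp add: inner_diff_right)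
  have j0J: "j0 \<in> J" using j0(1) tight_subset by blast
  then have respected: "snormal \<sigma>' j0 \<bullet> y \<le> soffset \<sigma>' j0" using y by (simp add: cell_def)
  obtain m where m: "j0 = Inl m"
  proof (cases j0)
    case (Inr g)
    then show thesis using violated respected by simp
  qed
  then have m_range: "m \<in> {1..n}" using j0J by simp
  have m_differs: "m \<in> \<sigma> \<longleftrightarrow> m \<notin> \<sigma>'"
    using violated respected m by (cases "m \<in> \<sigma>"; cases "m \<in> \<sigma>'") simp_all
  obtain p where cross: "snormal \<sigma> j0 \<bullet> p > soffset \<sigma> j0"
    and strict: "\<And>j. j \<in> J - {j0} \<Longrightarrow> snormal \<sigma> j \<bullet> p < soffset \<sigma> j" and fp: "f \<bullet> p < f \<bullet> z"
    by (rule minimizer_crosses_wall[OF z lam j0(1) lam_j0]) blast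
  have "p \<in> atom n w h X (toggle m \<sigma>) \<inter> P"
    by (rule toggle_atom_if_crossing[OF \<sigma> m_range cross[unfolded m] strict[unfolded m]])
  then show thesis using that m_range m_differs fp by blast
qed

definition vertices :: "'a set" where
  "vertices = {z \<in> X. card (T z) = DIM('a)}"

definition generic :: "'a \<Rightarrow> bool" where
  "generic f \<longleftrightarrow> (\<forall>S \<subseteq> normal_of w a ` J. card S < DIM('a) \<longrightarrow> f \<notin> span S) \<and>
     inj_on ((\<bullet>) f) vertices"

lemma finite_vertices: "finite vertices"
proof (rule finite_imageD)
  have "T ` vertices \<subseteq> Pow J" using tight_subset by blast
  then show "finite (T ` vertices)" using finite_J by (simp add: finite_subset)
  show "inj_on T vertices"
  proof (rule inj_onI)
    fix z z' assume zz: "z \<in> vertices" "z' \<in> vertices" "T z = T z'"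
    then have zX: "z \<in> X" and card: "card (T z) = DIM('a)" by (simp_all add: vertices_def)
    have "normal_of w a j \<bullet> (z - z') = 0" if "j \<in> T z" for j
    proof -
      have "j \<in> T z'" using that zz(3) by simp
      then show ?thesis using that by (simp add: tight_set_def inner_diff_right)
    qed
    then have "z - z' = 0" by (rule indep_family_full_orthogonal_eq_0[OF tight_indep[OF zX] card])
    then show "z = z'" by simp
  qed
qed

lemma generic_exists: "\<exists>f. generic f"
proof -
  define Spans where "Spans = span ` {S. S \<subseteq> normal_of w a ` J \<and> card S < DIM('a)}"
  define Walls where "Walls = (\<lambda>p. {x. (fst p - snd p) \<bullet> x = 0}) ` (vertices \<times> vertices - Id)"
  have "finite (Pow (normal_of w a ` J))" using finite_J by simp
  then have "finite Spans" unfolding Spans_def by (rule finite_imageI[OF finite_subset, rotated]) blast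
  moreover have "finite Walls" unfolding Walls_def using finite_vertices by simp
  moreover have "negligible Y" if Y: "Y \<in> Spans" for Y
  proof -
    obtain S where S: "S \<subseteq> normal_of w a ` J" "card S < DIM('a)" "Y = span S"
      using Y unfolding Spans_def by blast
    have "finite (normal_of w a ` J)" using finite_J by simp
    then have "finite S" using S(1) by (rule finite_subset[rotated])
    then show ?thesis unfolding S(3) using S(2) by (rule negligible_span_card_less)
  qed
  moreover have "negligible Y" if Y: "Y \<in> Walls" for Y
  proof -
    obtain p where p: "p \<in> vertices \<times> vertices - Id" "Y = {x. (fst p - snd p) \<bullet> x = 0}"
      using Y unfolding Walls_def by (rule imageE)
    then have "fst p - snd p \<noteq> 0" by (auto simp: prod_eq_iff)
    then show ?thesis unfolding p(2) by (intro negligible_hyperplane) simp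
  qed
  ultimately have "negligible (\<Union>(Spans \<union> Walls))" by (intro negligible_Union) auto
  then have "\<Union>(Spans \<union> Walls) \<noteq> UNIV" by (metis non_negligible_UNIV)
  then obtain f where f: "f \<notin> \<Union>(Spans \<union> Walls)" by blast
  have "f \<notin> span S" if "S \<subseteq> normal_of w a ` J" "card S < DIM('a)" for S
    using f that by (auto simp: Spans_def)
  moreover have "f \<bullet> v \<noteq> f \<bullet> v'" if vv': "v \<in> vertices" "v' \<in> vertices" "v \<noteq> v'" for v v'
  proof
    assume "f \<bullet> v = f \<bullet> v'"
    then have "f \<in> {x. (v - v') \<bullet> x = 0}" by (simp add: inner_diff_left inner_commute[of _ f])
    moreover have "{x. (v - v') \<bullet> x = 0} \<in> Walls"
      using vv' unfolding Walls_def by (intro image_eqI[of _ _ "(v, v')"]) auto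
    ultimately show False using f by blast
  qed
  ultimately have "generic f" unfolding generic_def inj_on_def by blast
  then show ?thesis ..
qed

lemma generic_minimizer_vertex:
  assumes gen: "generic f" and z: "z \<in> cell \<sigma>" and min: "\<And>y. y \<in> cell \<sigma> \<Longrightarrow> f \<bullet> z \<le> f \<bullet> y"
  shows "z \<in> vertices"
    and "\<exists>lam. (\<forall>j\<in>T z. lam j > 0) \<and> f = - (\<Sum>j\<in>T z. lam j *\<^sub>R snormal \<sigma> j)"
proof -
  have zX: "z \<in> X" using z cell_subset by blast
  obtain lam where lam: "\<forall>j\<in>T z. lam j \<ge> 0" "f = - (\<Sum>j\<in>T z. lam j *\<^sub>R snormal \<sigma> j)"
    using minimizer_multipliers[OF z min] by blast
  define D where "D = {j \<in> T z. lam j \<noteq> 0}"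
  have D: "D \<subseteq> T z" "finite D" using finite_tight by (auto simp: D_def)
  have "f = (\<Sum>j\<in>T z. (- lam j * side \<sigma> j) *\<^sub>R normal_of w a j)"
    unfolding lam(2) by (simp add: snormal_def sum_negf[symmetric])
  also have "\<dots> = (\<Sum>j\<in>D. (- lam j * side \<sigma> j) *\<^sub>R normal_of w a j)"
    using finite_tight by (intro sum.mono_neutral_right) (auto simp: D_def)
  finally have "f \<in> span (normal_of w a ` D)" by (simp only: sum_scaleR_in_span_image)
  moreover have "normal_of w a ` D \<subseteq> normal_of w a ` J" using D(1) tight_subset by blast
  ultimately have "DIM('a) \<le> card (normal_of w a ` D)"
    using gen unfolding generic_def by (meson not_less)
  moreover have "card (normal_of w a ` D) \<le> card D" using D(2) by (rule card_image_le)
  moreover have "card D \<le> card (T z)" using finite_tight D(1) by (rule card_mono)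
  moreover have "card (T z) \<le> DIM('a)" using tight_indep[OF zX] by (rule indep_family_card_le)
  ultimately have card: "card D = card (T z)" "card (T z) = DIM('a)" by linarith+
  then show "z \<in> vertices" using zX by (simp add: vertices_def)
  have "D = T z" using card(1) D(1) finite_tight by (simp add: card_subset_eq)
  then have "\<forall>j\<in>T z. lam j > 0" using lam(1) by (force simp: D_def)
  then show "\<exists>lam. (\<forall>j\<in>T z. lam j > 0) \<and> f = - (\<Sum>j\<in>T z. lam j *\<^sub>R snormal \<sigma> j)"
    using lam(2) by blast
qed

lemma side_eq_if_positive_combinations_eq:
  assumes zX: "z \<in> X" and pos: "\<forall>j\<in>T z. lam j > 0" "\<forall>j\<in>T z. lam' j > 0"
    and eq: "(\<Sum>j\<in>T z. lam j *\<^sub>R snormal \<sigma> j) = (\<Sum>j\<in>T z. lam' j *\<^sub>R snormal \<sigma>' j)"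
    and j: "j \<in> T z"
  shows "side \<sigma> j = side \<sigma>' j"
proof -
  have "(\<Sum>j\<in>T z. (lam j * side \<sigma> j - lam' j * side \<sigma>' j) *\<^sub>R normal_of w a j) = 0"
    using eq by (simp add: snormal_def scaleR_diff_left sum_subtractf)
  then have "lam j * side \<sigma> j = lam' j * side \<sigma>' j"
    using indep_familyD[OF tight_indep[OF zX] _ j] by fastforce
  moreover have "lam j > 0" "lam' j > 0" using pos j by auto
  ultimately show ?thesis
    using side_cases[of \<sigma> j] side_cases[of \<sigma>' j] by (auto simp: zero_less_mult_iff)
qed

lemma cell_determines_set:
  assumes \<sigma>: "\<sigma> \<subseteq> {1..n}" "\<sigma>' \<subseteq> {1..n}" and z: "z \<in> cell \<sigma>" "z \<in> cell \<sigma>'"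
    and side: "\<And>j. j \<in> T z \<Longrightarrow> side \<sigma> j = side \<sigma>' j"
  shows "\<sigma> = \<sigma>'"
proof (rule set_eqI)
  fix i show "i \<in> \<sigma> \<longleftrightarrow> i \<in> \<sigma>'"
  proof (cases "i \<in> {1..n}")
    case False
    then show ?thesis using \<sigma> by auto
  next
    case i: True
    show ?thesis
    proof (cases "Inl i \<in> T z")
      case True
      then show ?thesis using side[OF True] by (simp add: side_def split: if_splits)
    next
      case False
      then have "w i \<bullet> z \<noteq> h i" using i by (simp add: tight_set_def)
      moreover have "Inl i \<in> J" using i by simp
      then have "snormal \<sigma> (Inl i) \<bullet> z \<le> soffset \<sigma> (Inl i)"
        "snormal \<sigma>' (Inl i) \<bullet> z \<le> soffset \<sigma>' (Inl i)"
        using z unfolding cell_def by blast+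
      ultimately show ?thesis by (cases "i \<in> \<sigma>"; cases "i \<in> \<sigma>'") simp_all
    qed
  qed
qed

lemma generic_minimizers_eq:
  assumes gen: "generic f" and \<sigma>: "\<sigma> \<subseteq> {1..n}" "\<sigma>' \<subseteq> {1..n}"
    and z: "z \<in> cell \<sigma>" "\<And>y. y \<in> cell \<sigma> \<Longrightarrow> f \<bullet> z \<le> f \<bullet> y"
    and z': "z' \<in> cell \<sigma>'" "\<And>y. y \<in> cell \<sigma>' \<Longrightarrow> f \<bullet> z' \<le> f \<bullet> y"
    and eq: "f \<bullet> z = f \<bullet> z'"
  shows "\<sigma> = \<sigma>'"
proof -
  have "z = z'"
    using gen generic_minimizer_vertex(1)[OF gen z] generic_minimizer_vertex(1)[OF gen z'] eq
    by (auto simp: generic_def dest: inj_onD)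
  obtain lam where lam: "\<forall>j\<in>T z. lam j > 0" "f = - (\<Sum>j\<in>T z. lam j *\<^sub>R snormal \<sigma> j)"
    using generic_minimizer_vertex(2)[OF gen z] by blast
  obtain lam' where lam': "\<forall>j\<in>T z. lam' j > 0" "f = - (\<Sum>j\<in>T z. lam' j *\<^sub>R snormal \<sigma>' j)"
    using generic_minimizer_vertex(2)[OF gen z'] \<open>z = z'\<close> by blast
  have "z \<in> X" using z(1) cell_subset by blast
  moreover have "(\<Sum>j\<in>T z. lam j *\<^sub>R snormal \<sigma> j) = (\<Sum>j\<in>T z. lam' j *\<^sub>R snormal \<sigma>' j)"
    using lam(2) lam'(2) by (metis neg_equal_iff_equal)
  ultimately have "side \<sigma> j = side \<sigma>' j" if "j \<in> T z" for j
    using side_eq_if_positive_combinations_eq lam(1) lam'(1) that by blast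
  then show ?thesis using cell_determines_set[OF \<sigma> z(1)] z'(1) \<open>z = z'\<close> by blast
qed

theorem shellable_if_atoms_meet_polyhedron:
  assumes meet: "\<And>\<sigma>. \<sigma> \<in> hyp_code n w h X \<Longrightarrow> atom n w h X \<sigma> \<inter> P \<noteq> {}"
  shows "shellable (polar_complex n (hyp_code n w h X)) (int n - 1)"
proof -
  let ?C = "hyp_code n w h X"
  have C: "?C \<subseteq> Pow {1..n}" by (auto simp: hyp_code_def)
  obtain f where gen: "generic f" using generic_exists by blast
  have "\<exists>z\<in>cell \<sigma>. \<forall>y\<in>cell \<sigma>. f \<bullet> z \<le> f \<bullet> y" if "\<sigma> \<in> ?C" for \<sigma>
  proof (rule continuous_attains_inf[OF compact_cell])
    show "cell \<sigma> \<noteq> {}" using meet[OF that] atom_Int_polyhedron_subset_cell by blast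
  qed (intro continuous_intros)
  then obtain zm where zm: "\<And>\<sigma>. \<sigma> \<in> ?C \<Longrightarrow> zm \<sigma> \<in> cell \<sigma>"
    and zm_min: "\<And>\<sigma> y. \<sigma> \<in> ?C \<Longrightarrow> y \<in> cell \<sigma> \<Longrightarrow> f \<bullet> zm \<sigma> \<le> f \<bullet> y"
    by metis
  show ?thesis
  proof (rule shellable_polar_complex_if_potential[OF C, where \<Phi> = "\<lambda>\<sigma>. f \<bullet> zm \<sigma>"])
    show "inj_on (\<lambda>\<sigma>. f \<bullet> zm \<sigma>) ?C"
    proof (rule inj_onI)
      fix \<sigma> \<sigma>' assume "\<sigma> \<in> ?C" "\<sigma>' \<in> ?C" "f \<bullet> zm \<sigma> = f \<bullet> zm \<sigma>'"
      then show "\<sigma> = \<sigma>'"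
        using C by (intro generic_minimizers_eq[OF gen _ _ zm zm_min zm zm_min]) auto
    qed
  next
    fix \<sigma> \<sigma>' assume \<sigma>: "\<sigma> \<in> ?C" and \<sigma>': "\<sigma>' \<in> ?C" and lt: "f \<bullet> zm \<sigma>' < f \<bullet> zm \<sigma>"
    have \<sigma>_sub: "\<sigma> \<subseteq> {1..n}" using \<sigma> C by blast
    obtain m p where m: "m \<in> {1..n}" "m \<in> \<sigma> \<longleftrightarrow> m \<notin> \<sigma>'"
      and p: "p \<in> atom n w h X (toggle m \<sigma>) \<inter> P" "f \<bullet> p < f \<bullet> zm \<sigma>"
      using minimizer_descent[OF \<sigma>_sub zm[OF \<sigma>] zm_min[OF \<sigma>] zm[OF \<sigma>'] lt] by blast
    have toggle: "toggle m \<sigma> \<in> ?C"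
      using p(1) toggle_subset[OF \<sigma>_sub m(1)] by (auto simp: hyp_code_def)
    then have "f \<bullet> zm (toggle m \<sigma>) \<le> f \<bullet> p"
      using p(1) atom_Int_polyhedron_subset_cell by (blast intro: zm_min)
    then show "\<exists>m\<in>{1..n}. (m \<in> \<sigma> \<longleftrightarrow> m \<notin> \<sigma>') \<and> toggle m \<sigma> \<in> ?C \<and>
        f \<bullet> zm (toggle m \<sigma>) < f \<bullet> zm \<sigma>"
      using m toggle p(2) by fastforce
  qed
qed

end

section \<open>Bounding polytopes in general position\<close>

lemma exists_polytope_interior:
  fixes X :: "'a::euclidean_space set"
  assumes "open X" "convex X" "finite W" "W \<subseteq> X"
  obtains K where "polytope K" "K \<subseteq> X" "W \<subseteq> interior K"
proof -
  have "\<forall>x\<in>W. \<exists>S. finite S \<and> convex hull S \<subseteq> X \<and> x \<in> interior (convex hull S)"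
  proof
    fix x assume "x \<in> W"
    then have "x \<in> X" using assms(4) by blast
    then obtain l u where lu: "cbox l u \<subseteq> X" "x \<in> box l u"
      using open_contains_cbox[OF assms(1)] by metis
    obtain S where S: "finite S" "cbox l u = convex hull S" by (rule closed_interval_as_convex_hull)
    have "x \<in> interior (convex hull S)" using lu(2) unfolding S(2)[symmetric] by simp
    then show "\<exists>S. finite S \<and> convex hull S \<subseteq> X \<and> x \<in> interior (convex hull S)"
      using S lu(1) by auto
  qed
  then obtain S where "\<forall>x\<in>W. finite (S x) \<and> convex hull (S x) \<subseteq> X \<and> x \<in> interior (convex hull (S x))"
    by (rule bchoice[THEN exE])
  then have S: "\<And>x. x \<in> W \<Longrightarrow> finite (S x)"
    "\<And>x. x \<in> W \<Longrightarrow> convex hull (S x) \<subseteq> X" "\<And>x. x \<in> W \<Longrightarrow> x \<in> interior (convex hull (S x))"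
    by blast+
  define K where "K = convex hull (\<Union>x\<in>W. S x)"
  show thesis
  proof (rule that[of K])
    have "finite (\<Union>x\<in>W. S x)" using assms(3) S(1) by simp
    then show "polytope K" unfolding K_def polytope_def by (intro exI[of _ "\<Union>x\<in>W. S x"]) simp
    have "S x \<subseteq> X" if "x \<in> W" for x by (rule subset_trans[OF hull_subset S(2)[OF that]])
    then have "(\<Union>x\<in>W. S x) \<subseteq> X" by (simp add: UN_subset_iff)
    then show "K \<subseteq> X" unfolding K_def using assms(2) by (rule hull_minimal)
    show "W \<subseteq> interior K"
    proof
      fix x assume x: "x \<in> W"
      have "convex hull (S x) \<subseteq> K" unfolding K_def using x by (intro hull_mono) auto
      from interior_mono[OF this] show "x \<in> interior K" using S(3)[OF x] by blast
    qed
  qed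
qed

lemma polytope_as_polyhedron_of:
  fixes K :: "'a::euclidean_space set"
  assumes "polytope K"
  shows "\<exists>(F :: 'a set set) a b. finite F \<and> K = polyhedron_of F a b \<and> (\<forall>g\<in>F. a g \<noteq> 0)"
proof -
  obtain F where F: "finite F" "K = \<Inter>F" "\<forall>g\<in>F. \<exists>a b. a \<noteq> 0 \<and> g = {x. a \<bullet> x \<le> b}"
    using polytope_imp_polyhedron[OF assms] unfolding polyhedron_def by blast
  then have "\<forall>g\<in>F. \<exists>p. fst p \<noteq> 0 \<and> g = {x. fst p \<bullet> x \<le> snd p}" by fastforce
  then obtain p where p: "\<forall>g\<in>F. fst (p g) \<noteq> 0 \<and> g = {x. fst (p g) \<bullet> x \<le> snd (p g)}"
    by (rule bchoice[THEN exE])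
  have "x \<in> g \<longleftrightarrow> fst (p g) \<bullet> x \<le> snd (p g)" if "g \<in> F" for g x
    using p that by blast
  then have "K = polyhedron_of F (fst \<circ> p) (snd \<circ> p)"
    by (auto simp: polyhedron_of_def F(2))
  moreover have "\<forall>g\<in>F. (fst \<circ> p) g \<noteq> 0" using p by simp
  ultimately show ?thesis using F(1) by blast
qed

lemma interior_polyhedron_of_strict:
  assumes "g \<in> F" "a g \<noteq> 0" "x \<in> interior (polyhedron_of F a b)"
  shows "a g \<bullet> x < b g"
proof -
  have "polyhedron_of F a b \<subseteq> {x. a g \<bullet> x \<le> b g}" using assms(1) by (auto simp: polyhedron_of_def)
  then have "interior (polyhedron_of F a b) \<subseteq> {x. a g \<bullet> x < b g}"
    using interior_mono interior_halfspace_le[OF assms(2)] by metis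
  then show ?thesis using assms(3) by blast
qed

lemma tight_set_insert:
  assumes "g \<notin> F"
  shows "tight_set n (insert g F) w h a (c(g := r)) z =
    (if a g \<bullet> z = r then insert (Inr g) (tight_set n F w h a c z) else tight_set n F w h a c z)"
proof -
  have "offset_of h (c(g := r)) j = offset_of h c j" if "j \<in> constraint_set n F" for j
    using that assms by (auto simp: constraint_set_def)
  then show ?thesis using assms by (auto simp: tight_set_def constraint_set_def)
qed

text \<open>Only finitely many offsets put the new facet through a point of \<open>X\<close> where its normal is
  spanned by the normals tight there.\<close>
lemma exists_generic_offset:
  fixes w :: "nat \<Rightarrow> 'a::euclidean_space" and a :: "'b \<Rightarrow> 'a"
  assumes fin: "finite F" and g: "g \<notin> F" and lohi: "lo < hi"
    and indep: "\<And>z. z \<in> X \<Longrightarrow> indep_family (tight_set n F w h a c z) (normal_of w a)"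
  shows "\<exists>r. lo < r \<and> r \<le> hi \<and>
    (\<forall>z\<in>X. indep_family (tight_set n (insert g F) w h a (c(g := r)) z) (normal_of w a))"
proof -
  define coeffs where "coeffs D = (SOME \<mu>. a g = (\<Sum>j\<in>D. \<mu> j *\<^sub>R normal_of w a j))" for D
  define bad where "bad = (\<lambda>D. \<Sum>j\<in>D. coeffs D j * offset_of h c j) ` Pow (constraint_set n F)"
  have "finite bad" using fin by (simp add: bad_def constraint_set_def)
  moreover have "infinite {lo<..hi}" using lohi by simp
  ultimately have "infinite ({lo<..hi} - bad)" by (rule Diff_infinite_finite)
  then obtain r where r: "r \<in> {lo<..hi}" "r \<notin> bad" by (metis Diff_iff infinite_imp_nonempty ex_in_conv)
  have "indep_family (tight_set n (insert g F) w h a (c(g := r)) z) (normal_of w a)" if z: "z \<in> X" for z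
  proof (cases "a g \<bullet> z = r")
    case False
    then show ?thesis using indep[OF z] by (simp add: tight_set_insert[OF g])
  next
    case True
    let ?D = "tight_set n F w h a c z"
    have D: "?D \<subseteq> constraint_set n F" "finite ?D"
      using fin finite_subset by (auto simp: tight_set_def constraint_set_def)
    have "a g \<notin> span (normal_of w a ` ?D)"
    proof
      assume "a g \<in> span (normal_of w a ` ?D)"
      then have "\<exists>\<mu>. a g = (\<Sum>j\<in>?D. \<mu> j *\<^sub>R normal_of w a j)" by (rule in_span_image_imp_sum[OF D(2)])
      then have "a g = (\<Sum>j\<in>?D. coeffs ?D j *\<^sub>R normal_of w a j)"
        unfolding coeffs_def by (rule someI_ex)
      then have "r = (\<Sum>j\<in>?D. coeffs ?D j * (normal_of w a j \<bullet> z))"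
        using True by (simp add: inner_sum_left)
      also have "\<dots> = (\<Sum>j\<in>?D. coeffs ?D j * offset_of h c j)"
        by (rule sum.cong) (simp_all add: tight_set_def)
      finally have "r \<in> bad" using D(1) by (auto simp: bad_def)
      then show False using r(2) by blast
    qed
    moreover have "Inr g \<notin> ?D" using g by (simp add: tight_set_def)
    ultimately show ?thesis
      using True indep[OF z] by (simp add: tight_set_insert[OF g] indep_family_insert)
  qed
  then show ?thesis using r(1) by auto
qed

lemma exists_generic_offsets:
  fixes w :: "nat \<Rightarrow> 'a::euclidean_space" and a :: "'b \<Rightarrow> 'a"
  assumes "finite G" "\<And>g. g \<in> G \<Longrightarrow> lo g < hi g"
    and stable: "\<And>z. z \<in> X \<Longrightarrow> indep_family {i \<in> {1..n}. w i \<bullet> z = h i} w"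
  shows "\<exists>c. (\<forall>g\<in>G. lo g < c g \<and> c g \<le> hi g) \<and>
    (\<forall>z\<in>X. indep_family (tight_set n G w h a c z) (normal_of w a))"
  using assms(1,2)
proof (induction G rule: finite_induct)
  case empty
  have "indep_family (tight_set n {} w h a c z) (normal_of w a)" if "z \<in> X" for z c
  proof -
    have "tight_set n {} w h a c z = Inl ` {i \<in> {1..n}. w i \<bullet> z = h i}"
      by (auto simp: tight_set_def constraint_set_def)
    then show ?thesis by (simp only:) (rule indep_family_reindex[OF stable[OF that]]; simp)
  qed
  then show ?case by blast
next
  case (insert g F)
  then obtain c where c: "\<forall>g\<in>F. lo g < c g \<and> c g \<le> hi g"
    "\<forall>z\<in>X. indep_family (tight_set n F w h a c z) (normal_of w a)"
    by blast
  obtain r where r: "lo g < r" "r \<le> hi g"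
    and indep: "\<forall>z\<in>X. indep_family (tight_set n (insert g F) w h a (c(g := r)) z) (normal_of w a)"
    using exists_generic_offset[OF insert(1,2) insert(4)[of g]] c(2) by blast
  have "\<forall>g'\<in>insert g F. lo g' < (c(g := r)) g' \<and> (c(g := r)) g' \<le> hi g'"
    using c(1) insert(2) r by auto
  then show ?case using indep by blast
qed

lemma exists_generic_bounded_arrangement:
  fixes w :: "nat \<Rightarrow> 'a::euclidean_space"
  assumes stable: "stable_pair n w h X" and W: "finite W" "W \<subseteq> X"
  shows "\<exists>(G :: 'a set set) a c. generic_bounded_arrangement n w h G a c X \<and> W \<subseteq> polyhedron_of G a c"
proof -
  have "open X" "convex X" using stable by (simp_all add: stable_pair_def)
  then obtain K where K: "polytope K" "K \<subseteq> X" "W \<subseteq> interior K"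
    using W by (rule exists_polytope_interior)
  obtain G :: "'a set set" and a b where G: "finite G" "K = polyhedron_of G a b"
    and a: "\<forall>g\<in>G. a g \<noteq> 0"
    using polytope_as_polyhedron_of[OF K(1)] by blast
  define lo where "lo g = Max (insert (b g - 1) ((\<lambda>x. a g \<bullet> x) ` W))" for g
  have lo_less: "lo g < b g" if "g \<in> G" for g
  proof -
    have "\<forall>x\<in>W. a g \<bullet> x < b g"
      using K(3) interior_polyhedron_of_strict[OF that] a that unfolding G(2) by blast
    then show ?thesis using W(1) by (simp add: lo_def)
  qed
  have "\<exists>c. (\<forall>g\<in>G. lo g < c g \<and> c g \<le> b g) \<and>
      (\<forall>z\<in>X. indep_family (tight_set n G w h a c z) (normal_of w a))"
    using lo_less stable_pair_tight_indep_family[OF stable] by (rule exists_generic_offsets[OF G(1)])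
  then obtain c where c: "\<forall>g\<in>G. lo g < c g \<and> c g \<le> b g"
    and indep: "\<forall>z\<in>X. indep_family (tight_set n G w h a c z) (normal_of w a)"
    by blast
  have sub: "polyhedron_of G a c \<subseteq> K"
  proof
    fix x assume x: "x \<in> polyhedron_of G a c"
    have "a g \<bullet> x \<le> b g" if "g \<in> G" for g
    proof -
      have "a g \<bullet> x \<le> c g" using x that by (simp add: polyhedron_of_def)
      also have "c g \<le> b g" using c that by blast
      finally show ?thesis .
    qed
    then show "x \<in> K" by (simp add: G(2) polyhedron_of_def)
  qed
  have "generic_bounded_arrangement n w h G a c X"
  proof
    show "finite G" by (rule G(1))
    show "polyhedron_of G a c \<subseteq> X" using sub K(2) by blast
    show "bounded (polyhedron_of G a c)"
      using sub polytope_imp_bounded[OF K(1)] by (rule bounded_subset[rotated])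
  qed (use indep in blast)
  moreover have "W \<subseteq> polyhedron_of G a c"
  proof
    fix x assume "x \<in> W"
    then have "a g \<bullet> x \<le> lo g" for g unfolding lo_def using W(1) by (intro Max_ge) auto
    moreover have "lo g \<le> c g" if "g \<in> G" for g using c that by (simp add: less_imp_le)
    ultimately have "a g \<bullet> x \<le> c g" if "g \<in> G" for g using that order_trans by blast
    then show "x \<in> polyhedron_of G a c" by (simp add: polyhedron_of_def)
  qed
  ultimately show ?thesis by blast
qed

lemma atom_subset: "atom n w h X \<sigma> \<subseteq> X"
  by (auto simp: atom_def)

theorem theoremD:
  fixes n :: nat and w :: "nat \<Rightarrow> 'a::euclidean_space" and h :: "nat \<Rightarrow> real" and X :: "'a set"
  assumes "stable_pair n w h X"
  shows "shellable (polar_complex n (hyp_code n w h X)) (int n - 1)"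
proof -
  let ?C = "hyp_code n w h X"
  have "\<forall>\<sigma>\<in>?C. \<exists>x. x \<in> atom n w h X \<sigma>" by (simp add: hyp_code_def ex_in_conv)
  then obtain pt where pt: "\<forall>\<sigma>\<in>?C. pt \<sigma> \<in> atom n w h X \<sigma>" by (rule bchoice[THEN exE])
  have "?C \<subseteq> Pow {1..n}" by (auto simp: hyp_code_def)
  then have "finite (pt ` ?C)" by (simp add: finite_subset)
  moreover have "pt ` ?C \<subseteq> X" using pt atom_subset by blast
  ultimately have "\<exists>(G :: 'a set set) a c.
      generic_bounded_arrangement n w h G a c X \<and> pt ` ?C \<subseteq> polyhedron_of G a c"
    by (rule exists_generic_bounded_arrangement[OF assms])
  then obtain G :: "'a set set" and a c where
    arr: "generic_bounded_arrangement n w h G a c X" and sub: "pt ` ?C \<subseteq> polyhedron_of G a c"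
    by blast
  have "atom n w h X \<sigma> \<inter> polyhedron_of G a c \<noteq> {}" if "\<sigma> \<in> ?C" for \<sigma>
    using pt sub that by blast
  then show ?thesis by (rule generic_bounded_arrangement.shellable_if_atoms_meet_polyhedron[OF arr])
qed

end
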